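(* Let $L$ be a finite-dimensional Lie algebra over an arbitrary field $F$. Let $U$ be a core-free subalgebra of $L$ such that $\langle u,z\rangle$ is either two-dimensional or a $\mu$-algebra for every $0\ne u\in U$ and $z\in L\setminus U$. Then one of the following holds: (i) $L$ is almost abelian; (ii) $\langle u,z\rangle$ is a $\mu$-algebra for every $0\ne u\in U$ and $z\in L\setminus U$; (iii) $F$ has characteristic two and there is an isomorphism $L\cong K$ carrying $U$ onto $Fc$.
   Context: $K$ denotes the three-dimensional Lie algebra with basis $a,b,c$ and products $[a,b]=c$, $[b,c]=b$, $[a,c]=a$. $\langle u,z\rangle$ denotes the subalgebra generated by $u,z$. The core of $U$ is the largest ideal of $L$ contained in $U$; $U$ is core-free if its core is $0$. A $\mu$-algebra is a non-solvable Lie algebra in which every proper subalgebra is one-dimensional. $L$ is almost abelian if $L=L^2\oplus Fx$ for some $x$, where $L^2=[L,L]$ is abelian and $\mathrm{ad}\,x$ acts as the identity map on $L^2$. *)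

theory Defs
  imports Complex_Main
begin

text \<open>A Lie algebra over a field 'f: the whole type 'v is the underlying vector
space (scalar multiplication scale), with Lie bracket br.\<close>

definition lie_algebra :: "('f::field \<Rightarrow> 'v::ab_group_add \<Rightarrow> 'v) \<Rightarrow> ('v \<Rightarrow> 'v \<Rightarrow> 'v) \<Rightarrow> bool" where
  "lie_algebra scale br \<longleftrightarrow>
     vector_space scale \<and>
     (\<forall>x y z. br (x + y) z = br x z + br y z) \<and>
     (\<forall>x y z. br x (y + z) = br x y + br x z) \<and>
     (\<forall>k x y. br (scale k x) y = scale k (br x y)) \<and>
     (\<forall>k x y. br x (scale k y) = scale k (br x y)) \<and>
     (\<forall>x. br x x = 0) \<and>
     (\<forall>x y z. br x (br y z) + br y (br z x) + br z (br x y) = 0)"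

definition fin_dim :: "('f::field \<Rightarrow> 'v::ab_group_add \<Rightarrow> 'v) \<Rightarrow> bool" where
  "fin_dim scale \<longleftrightarrow> (\<exists>B. finite B \<and> module.span scale B = UNIV)"

definition lie_subalgebra :: "('f::field \<Rightarrow> 'v::ab_group_add \<Rightarrow> 'v) \<Rightarrow> ('v \<Rightarrow> 'v \<Rightarrow> 'v) \<Rightarrow> 'v set \<Rightarrow> bool" where
  "lie_subalgebra scale br S \<longleftrightarrow>
     module.subspace scale S \<and> (\<forall>x\<in>S. \<forall>y\<in>S. br x y \<in> S)"

definition lie_ideal :: "('f::field \<Rightarrow> 'v::ab_group_add \<Rightarrow> 'v) \<Rightarrow> ('v \<Rightarrow> 'v \<Rightarrow> 'v) \<Rightarrow> 'v set \<Rightarrow> bool" where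
  "lie_ideal scale br I \<longleftrightarrow>
     module.subspace scale I \<and> (\<forall>x. \<forall>y\<in>I. br x y \<in> I)"

definition core :: "('f::field \<Rightarrow> 'v::ab_group_add \<Rightarrow> 'v) \<Rightarrow> ('v \<Rightarrow> 'v \<Rightarrow> 'v) \<Rightarrow> 'v set \<Rightarrow> 'v set" where
  "core scale br U = module.span scale (\<Union>{I. lie_ideal scale br I \<and> I \<subseteq> U})"

definition core_free :: "('f::field \<Rightarrow> 'v::ab_group_add \<Rightarrow> 'v) \<Rightarrow> ('v \<Rightarrow> 'v \<Rightarrow> 'v) \<Rightarrow> 'v set \<Rightarrow> bool" where
  "core_free scale br U \<longleftrightarrow> core scale br U = {0}"

definition gen_subalg :: "('f::field \<Rightarrow> 'v::ab_group_add \<Rightarrow> 'v) \<Rightarrow> ('v \<Rightarrow> 'v \<Rightarrow> 'v) \<Rightarrow> 'v set \<Rightarrow> 'v set" where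
  "gen_subalg scale br X = \<Inter>{S. lie_subalgebra scale br S \<and> X \<subseteq> S}"

definition bracket_set :: "('f::field \<Rightarrow> 'v::ab_group_add \<Rightarrow> 'v) \<Rightarrow> ('v \<Rightarrow> 'v \<Rightarrow> 'v) \<Rightarrow> 'v set \<Rightarrow> 'v set \<Rightarrow> 'v set" where
  "bracket_set scale br A B = module.span scale {br x y | x y. x \<in> A \<and> y \<in> B}"

fun derived_series :: "('f::field \<Rightarrow> 'v::ab_group_add \<Rightarrow> 'v) \<Rightarrow> ('v \<Rightarrow> 'v \<Rightarrow> 'v) \<Rightarrow> 'v set \<Rightarrow> nat \<Rightarrow> 'v set" where
  "derived_series scale br S 0 = S"
| "derived_series scale br S (Suc n) =
     bracket_set scale br (derived_series scale br S n) (derived_series scale br S n)"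

definition solvable :: "('f::field \<Rightarrow> 'v::ab_group_add \<Rightarrow> 'v) \<Rightarrow> ('v \<Rightarrow> 'v \<Rightarrow> 'v) \<Rightarrow> 'v set \<Rightarrow> bool" where
  "solvable scale br S \<longleftrightarrow> (\<exists>n. derived_series scale br S n = {0})"

definition mu_algebra :: "('f::field \<Rightarrow> 'v::ab_group_add \<Rightarrow> 'v) \<Rightarrow> ('v \<Rightarrow> 'v \<Rightarrow> 'v) \<Rightarrow> 'v set \<Rightarrow> bool" where
  "mu_algebra scale br S \<longleftrightarrow>
     \<not> solvable scale br S \<and>
     (\<forall>T. lie_subalgebra scale br T \<and> T \<subseteq> S \<and> T \<noteq> S \<and> T \<noteq> {0}
          \<longrightarrow> vector_space.dim scale T = 1)"

definition almost_abelian :: "('f::field \<Rightarrow> 'v::ab_group_add \<Rightarrow> 'v) \<Rightarrow> ('v \<Rightarrow> 'v \<Rightarrow> 'v) \<Rightarrow> bool" where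
  "almost_abelian scale br \<longleftrightarrow>
     (let L2 = bracket_set scale br UNIV UNIV in
      \<exists>x. L2 \<inter> module.span scale {x} = {0} \<and>
          module.span scale (L2 \<union> {x}) = UNIV \<and>
          (\<forall>a\<in>L2. \<forall>b\<in>L2. br a b = 0) \<and>
          (\<forall>a\<in>L2. br x a = a))"

text \<open>L is isomorphic to K = span{a,b,c}, [a,b]=c, [b,c]=b, [a,c]=a, via an
isomorphism carrying U onto Fc: equivalently L has a basis a,b,c with these
products and U = Fc.\<close>
definition iso_K_with :: "('f::field \<Rightarrow> 'v::ab_group_add \<Rightarrow> 'v) \<Rightarrow> ('v \<Rightarrow> 'v \<Rightarrow> 'v) \<Rightarrow> 'v set \<Rightarrow> bool" where
  "iso_K_with scale br U \<longleftrightarrow>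
     (\<exists>a b c. a \<noteq> b \<and> a \<noteq> c \<and> b \<noteq> c \<and>
        \<not> module.dependent scale {a, b, c} \<and>
        module.span scale {a, b, c} = UNIV \<and>
        br a b = c \<and> br b c = b \<and> br a c = a \<and>
        U = module.span scale {c})"

end

theory Submission
  imports Defs
begin

text \<open>
  If alternative (ii) fails, there are
  \<open>0 \<noteq> u \<in> U\<close> and \<open>z \<notin> U\<close> such that \<open>\<langle>u,z\<rangle>\<close> is two-dimensional, so
  \<open>[u,z] \<in> span {u,z}\<close>.  Using that a \<open>\<mu>\<close>-algebra has no two-dimensional subalgebra and
  that its proper subalgebras through \<open>u\<close> lie in \<open>F u\<close>, this property propagates to
  every \<open>z' \<notin> U\<close>, and then a comparison of coefficients shows that \<open>ad u\<close> acts as a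
  single scalar \<open>\<lambda>\<close> modulo \<open>F u\<close>.  Core-freeness forces \<open>\<lambda> \<noteq> 0\<close>, so
  \<open>L = F u \<oplus> W\<close> with \<open>W\<close> the \<open>\<lambda>\<close>-eigenspace of \<open>ad u\<close>, and the Jacobi identity
  gives \<open>[W,W] \<subseteq> F u\<close> with \<open>2 [W,W] = 0\<close>.  If \<open>W\<close> is abelian, \<open>L\<close> is almost abelian
  with \<open>L\<^sup>2 = W\<close>; otherwise the characteristic is two, \<open>W\<close> is two-dimensional,
  \<open>U = F u\<close>, and a suitably scaled basis of \<open>W \<oplus> F u\<close> has the products of \<open>K\<close>.
\<close>

lemma CHAR_eq_two:
  assumes "(2::'a::field) = 0"
  shows "CHAR('a) = 2"
proof (rule CHAR_eq_posI)
  show "of_nat 2 = (0::'a)" using assms by simp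
  show "of_nat n \<noteq> (0::'a)" if "n > 0" "n < 2" for n
    using that by (simp add: less_2_cases_iff)
qed simp

context vector_space
begin

notation scale (infixr "*s" 75)

lemma neg_eq_self_char_two:
  fixes x :: 'b
  assumes "(2::'a) = 0"
  shows "- x = x"
proof -
  have "(1 + 1 :: 'a) *s x = x + x" by (simp only: scale_left_distrib scale_one)
  then have "x + x = (2::'a) *s x" by (simp only: one_add_one)
  then have "x + x = 0" using assms by (simp only: scale_zero_left)
  then show ?thesis by (simp add: minus_unique)
qed

lemma scale_cancel: "c \<noteq> 0 \<Longrightarrow> c *s v = w \<Longrightarrow> v = inverse c *s w"
  by auto

lemma scale_in_subspace_imp_zero:
  assumes "subspace S" "k *s x \<in> S" "x \<notin> S"
  shows "k = 0"
proof (rule ccontr)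
  assume "k \<noteq> 0"
  then have "x = inverse k *s (k *s x)" by simp
  then show False using assms subspace_scale by metis
qed

lemma span_pair_iff: "x \<in> span {a, b} \<longleftrightarrow> (\<exists>p q. x = p *s a + q *s b)"
proof
  assume "x \<in> span {a, b}"
  then obtain p where "x - p *s a \<in> span {b}" by (auto simp: span_breakdown_eq)
  then obtain q where "x - p *s a = q *s b" by (auto simp: span_singleton)
  then have "x = p *s a + q *s b" by (simp add: algebra_simps)
  then show "\<exists>p q. x = p *s a + q *s b" by blast
qed (auto simp: span_add span_scale span_base)

lemma independent_card_dim_spans:
  assumes "independent B" "finite B" "B \<subseteq> S" "card B = dim S" "card B > 0"
  shows "S \<subseteq> span B"
proof
  fix x assume x: "x \<in> S"
  obtain B' where B': "B' \<subseteq> S" "independent B'" "S \<subseteq> span B'" "card B' = dim S"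
    using basis_exists by blast
  have "finite B'" using B'(4) assms(4,5) card.infinite by fastforce
  show "x \<in> span B"
  proof (rule ccontr)
    assume xn: "x \<notin> span B"
    then have "independent (insert x B)" using assms(1) by (rule independent_insertI)
    moreover have "insert x B \<subseteq> span B'" using x assms(3) B'(3) by auto
    ultimately have "card (insert x B) \<le> card B'"
      using independent_span_bound \<open>finite B'\<close> by blast
    moreover have "x \<notin> B" using xn span_base by blast
    ultimately show False using assms(2,4) B'(4) by simp
  qed
qed

lemma independent_pair: "u \<noteq> 0 \<Longrightarrow> w \<notin> span {u} \<Longrightarrow> independent {u, w}"
  using independent_insertI[of w "{u}"] by (auto simp: independent_insert insert_commute)

lemma card_pair: "w \<notin> span {u} \<Longrightarrow> card {u, w} = 2"
  using span_base[of u "{u}"] by (cases "w = u") auto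

lemma dim_two_span:
  assumes "dim S = 2" "u \<in> S" "w \<in> S" "u \<noteq> 0" "w \<notin> span {u}"
  shows "S \<subseteq> span {u, w}"
  using independent_card_dim_spans[of "{u, w}" S] independent_pair card_pair assms by auto

lemma dim_one_span:
  assumes "dim S = 1" "u \<in> S" "u \<noteq> 0"
  shows "S \<subseteq> span {u}"
  using independent_card_dim_spans[of "{u}" S] assms by (auto simp: independent_insert)

end

text \<open>Lie algebras over \<open>scale\<close>, as a locale so that the linear algebra of
  \<open>vector_space\<close> is available.\<close>
locale lie = vector_space scale for scale :: "'f::field \<Rightarrow> 'v::ab_group_add \<Rightarrow> 'v" (infixr "*s" 75) +
  fixes br :: "'v \<Rightarrow> 'v \<Rightarrow> 'v"
  assumes bracket_add_left: "br (x + y) z = br x z + br y z"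
    and bracket_add_right: "br x (y + z) = br x y + br x z"
    and bracket_scale_left: "br (k *s x) y = k *s (br x y)"
    and bracket_scale_right: "br x (k *s y) = k *s (br x y)"
    and bracket_self: "br x x = 0"
    and jacobi: "br x (br y z) + br y (br z x) + br z (br x y) = 0"

lemma lie_algebra_imp_lie: "lie_algebra scale br \<Longrightarrow> lie scale br"
  unfolding lie_algebra_def lie_def lie_axioms_def by blast

context lie
begin

lemma bracket_zero_left [simp]: "br 0 x = 0"
  using bracket_add_left[of 0 0 x] by simp

lemma bracket_zero_right [simp]: "br x 0 = 0"
  using bracket_add_right[of x 0 0] by simp

lemma bracket_antisym: "br x y = - br y x"
proof -
  have "br x x + br y x + (br x y + br y y) = 0"
    using bracket_self[of "x + y"] by (simp only: bracket_add_left bracket_add_right)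
  then have "br x y + br y x = 0" by (simp add: bracket_self add.commute)
  then show ?thesis by (simp add: eq_neg_iff_add_eq_0)
qed

lemma bracket_neg_right [simp]: "br x (- y) = - br x y"
  using bracket_add_right[of x y "- y"] by (simp add: eq_neg_iff_add_eq_0 add.commute)

lemma bracket_span_pair: "x \<in> span {a, b} \<Longrightarrow> y \<in> span {a, b} \<Longrightarrow> br x y \<in> span {br a b}"
proof -
  assume "x \<in> span {a, b}" "y \<in> span {a, b}"
  then obtain p q r t where x: "x = p *s a + q *s b" and y: "y = r *s a + t *s b"
    by (auto simp: span_pair_iff)
  have "br x y = (p * t - q * r) *s br a b"
    by (simp add: x y bracket_add_left bracket_add_right bracket_scale_left bracket_scale_right
        bracket_self bracket_antisym[of b a] algebra_simps)
  then show ?thesis by (simp add: span_scale span_base)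
qed

lemma span_pair_subalgebra: "br a b \<in> span {a, b} \<Longrightarrow> lie_subalgebra scale br (span {a, b})"
  unfolding lie_subalgebra_def
  using bracket_span_pair span_minimal[of "{br a b}" "span {a, b}"] by auto

text \<open>Every subspace of a two-dimensional space is solvable: its second derived
  algebra is zero, since its first derived algebra lies in a line.\<close>
lemma solvable_in_span_pair:
  assumes S: "S \<subseteq> span {a, b}"
  shows "solvable scale br S"
proof -
  have D1: "derived_series scale br S 1 \<subseteq> span {br a b}"
    unfolding bracket_set_def One_nat_def derived_series.simps
    by (rule span_minimal) (use S bracket_span_pair[of _ a b] in blast)+
  have "br x y = 0" if "x \<in> derived_series scale br S 1" "y \<in> derived_series scale br S 1" for x y
  proof -
    have "x \<in> range (\<lambda>k. k *s br a b)" "y \<in> range (\<lambda>k. k *s br a b)"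
      using that D1 by (auto simp: span_singleton)
    then obtain k m where "x = k *s br a b" "y = m *s br a b" by blast
    then show ?thesis by (simp add: bracket_scale_left bracket_scale_right bracket_self)
  qed
  then have "derived_series scale br S 2 = {0}"
    by (auto simp: numeral_2_eq_2 bracket_set_def span_zero
        intro!: span_mono[of _ "{0}", simplified] elim!: subsetD[OF span_mono, rotated])
  then show ?thesis unfolding solvable_def by blast
qed

lemma gen_subalg_subalgebra: "lie_subalgebra scale br (gen_subalg scale br X)"
  unfolding gen_subalg_def lie_subalgebra_def by (auto intro!: subspace_Inter)

lemma gen_subalg_generators: "X \<subseteq> gen_subalg scale br X"
  unfolding gen_subalg_def by auto

lemma subalgebra_bracket: "lie_subalgebra scale br S \<Longrightarrow> x \<in> S \<Longrightarrow> y \<in> S \<Longrightarrow> br x y \<in> S"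
  unfolding lie_subalgebra_def by simp

lemma subalgebra_subspace: "lie_subalgebra scale br S \<Longrightarrow> subspace S"
  unfolding lie_subalgebra_def by simp

lemma subalgebra_inter:
  "lie_subalgebra scale br S \<Longrightarrow> lie_subalgebra scale br T \<Longrightarrow> lie_subalgebra scale br (S \<inter> T)"
  unfolding lie_subalgebra_def by (auto intro: subspace_inter)

text \<open>A \<open>\<mu>\<close>-algebra contains no pair of independent vectors spanning a subalgebra:
  that subalgebra would be either proper and two-dimensional, or all of \<open>S\<close> and solvable.\<close>
lemma mu_algebra_no_pair_subalgebra:
  assumes mu: "mu_algebra scale br S" and S: "lie_subalgebra scale br S"
    and u: "u \<in> S" "u \<noteq> 0" and w: "w \<in> S" "w \<notin> span {u}"
    and closed: "br u w \<in> span {u, w}"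
  shows False
proof -
  have P: "lie_subalgebra scale br (span {u, w})" using closed by (rule span_pair_subalgebra)
  have PS: "span {u, w} \<subseteq> S"
    using subalgebra_subspace[OF S] u w by (intro span_minimal) auto
  have "dim (span {u, w}) = 2"
    using dim_span_eq_card_independent[OF independent_pair[OF u(2) w(2)]] card_pair[OF w(2)] by simp
  moreover have "span {u, w} \<noteq> {0}" using u span_base[of u "{u, w}"] by auto
  ultimately have "span {u, w} = S"
    using mu P PS unfolding mu_algebra_def by fastforce
  then show False using solvable_in_span_pair[of S u w] mu unfolding mu_algebra_def by auto
qed

lemma mu_algebra_proper_subalgebra:
  assumes mu: "mu_algebra scale br S" and T: "lie_subalgebra scale br T" "T \<subseteq> S" "T \<noteq> S"
    and u: "u \<in> T" "u \<noteq> 0"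
  shows "T \<subseteq> span {u}"
proof -
  have "T \<noteq> {0}" using u by auto
  then have "dim T = 1" using mu T unfolding mu_algebra_def by blast
  then show ?thesis using dim_one_span u by blast
qed

lemma core_free_ideal_trivial:
  assumes "core_free scale br U" "lie_ideal scale br I" "I \<subseteq> U"
  shows "I \<subseteq> {0}"
proof -
  have "I \<subseteq> \<Union>{I. lie_ideal scale br I \<and> I \<subseteq> U}" using assms(2,3) by blast
  then have "I \<subseteq> core scale br U" unfolding core_def using span_superset by (rule order_trans)
  then show ?thesis using assms(1) unfolding core_free_def by simp
qed

end

locale pair_condition = lie scale br
  for scale :: "'f::field \<Rightarrow> 'v::ab_group_add \<Rightarrow> 'v" (infixr "*s" 75) and br +
  fixes U :: "'v set"
  assumes U_subalgebra: "lie_subalgebra scale br U"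
    and pair_hyp: "\<forall>u\<in>U. \<forall>z. u \<noteq> 0 \<and> z \<notin> U \<longrightarrow>
           dim (gen_subalg scale br {u, z}) = 2 \<or> mu_algebra scale br (gen_subalg scale br {u, z})"
begin

lemma U_subspace: "subspace U"
  using U_subalgebra by (rule subalgebra_subspace)

lemma not_in_span_of_U: "u \<in> U \<Longrightarrow> z \<notin> U \<Longrightarrow> z \<notin> span {u}"
  using span_minimal[of "{u}" U] U_subspace by auto

lemma pair_cases:
  assumes "u \<in> U" "u \<noteq> 0" "z \<notin> U"
  obtains "dim (gen_subalg scale br {u, z}) = 2" | "mu_algebra scale br (gen_subalg scale br {u, z})"
  using pair_hyp assms by blast

lemma two_dim_pair_bracket:
  assumes "u \<in> U" "u \<noteq> 0" "z \<notin> U" "dim (gen_subalg scale br {u, z}) = 2"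
  shows "br u z \<in> span {u, z}"
proof -
  let ?S = "gen_subalg scale br {u, z}"
  have "u \<in> ?S" "z \<in> ?S" using gen_subalg_generators[of "{u, z}"] by auto
  then have "?S \<subseteq> span {u, z}" using dim_two_span assms not_in_span_of_U by blast
  moreover have "br u z \<in> ?S" using subalgebra_bracket[OF gen_subalg_subalgebra] \<open>u \<in> ?S\<close> \<open>z \<in> ?S\<close> .
  ultimately show ?thesis by blast
qed

text \<open>The key exclusion behind the propagation step: given \<open>v \<notin> U\<close> with
  \<open>[u,v] = \<lambda> v + \<alpha> u\<close>, no \<open>\<mu>\<close>-algebra \<open>S \<ni> u\<close> contains some \<open>z \<notin> U\<close> with \<open>z + v \<notin> U\<close>.\<close>
lemma no_mu_through_shift_two_dim:
  assumes u: "u \<in> U" "u \<noteq> 0" and v: "v \<notin> U" "br u v = lam *s v + al *s u"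
    and S: "mu_algebra scale br S" "lie_subalgebra scale br S" "u \<in> S"
    and z: "z \<in> S" "z \<notin> U" "z + v \<notin> U"
    and S': "dim (gen_subalg scale br {u, z + v}) = 2"
  shows False
proof -
  obtain p q where pq: "br u (z + v) = p *s u + q *s (z + v)"
    using two_dim_pair_bracket[OF u z(3) S'] by (auto simp: span_pair_iff)
  have "(q - lam) *s v = br u z - (p - al) *s u - q *s z"
    using pq v(2) by (simp add: bracket_add_right algebra_simps)
  also have "\<dots> \<in> S"
    using S z subalgebra_bracket[OF S(2)] subalgebra_subspace[OF S(2)]
    by (intro subspace_diff subspace_scale) auto
  finally have qv: "(q - lam) *s v \<in> S" .
  show False
  proof (cases "v \<in> S")
    case True
    have "br u v \<in> span {u, v}" using v(2) span_pair_iff[of "br u v" u v] by (auto simp: add.commute)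
    then show False
      using mu_algebra_no_pair_subalgebra[OF S u(2) True] not_in_span_of_U u v by blast
  next
    case False
    then have "q = lam" using scale_in_subspace_imp_zero[OF subalgebra_subspace[OF S(2)] qv] by simp
    then have "br u z = (p - al) *s u + q *s z" using pq v(2) by (simp add: bracket_add_right algebra_simps)
    then have "br u z \<in> span {u, z}" using span_pair_iff by blast
    then show False
      using mu_algebra_no_pair_subalgebra[OF S u(2) z(1)] not_in_span_of_U u z by blast
  qed
qed

text \<open>The same exclusion when \<open>S' = \<langle>u, z + v\<rangle>\<close> is a \<open>\<mu>\<close>-algebra: the element
  \<open>t = [u,z] - \<lambda> z + \<alpha> u = [u,z+v] - \<lambda>(z+v)\<close> lies in \<open>S \<inter> S'\<close>, which is either all of
  \<open>S\<close> (then \<open>v \<in> S'\<close>) or the line \<open>F u\<close> (then \<open>[u,z+v] \<in> span {u, z+v}\<close>).\<close>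
lemma no_mu_through_shift_mu:
  assumes u: "u \<in> U" "u \<noteq> 0" and v: "v \<notin> U" "br u v = lam *s v + al *s u"
    and S: "mu_algebra scale br S" "lie_subalgebra scale br S" "u \<in> S"
    and z: "z \<in> S" "z \<notin> U" "z + v \<notin> U"
    and S': "mu_algebra scale br (gen_subalg scale br {u, z + v})"
  shows False
proof -
  let ?S' = "gen_subalg scale br {u, z + v}" and ?t = "br u z - lam *s z + al *s u"
  have S'sub: "lie_subalgebra scale br ?S'" by (rule gen_subalg_subalgebra)
  have uS': "u \<in> ?S'" and zvS': "z + v \<in> ?S'" using gen_subalg_generators[of "{u, z + v}"] by auto
  have not_line: "z + v \<notin> span {u}" "v \<notin> span {u}" using not_in_span_of_U u z v by auto
  have tS: "?t \<in> S"
    using S z subalgebra_bracket[OF S(2)] subalgebra_subspace[OF S(2)]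
    by (intro subspace_diff subspace_scale subspace_add) auto
  have t_eq: "?t = br u (z + v) - lam *s (z + v)" using v(2) by (simp add: bracket_add_right algebra_simps)
  have tS': "?t \<in> ?S'" unfolding t_eq
    using uS' zvS' subalgebra_bracket[OF S'sub] subalgebra_subspace[OF S'sub]
    by (intro subspace_diff subspace_scale) auto
  show False
  proof (cases "S \<inter> ?S' = S")
    case True
    then have "z \<in> ?S'" using z by blast
    then have "(z + v) - z \<in> ?S'" using zvS' subalgebra_subspace[OF S'sub] subspace_diff by blast
    then have "v \<in> ?S'" by simp
    moreover have "br u v \<in> span {u, v}" using v(2) span_pair_iff[of "br u v" u v] by (auto simp: add.commute)
    ultimately show False using mu_algebra_no_pair_subalgebra[OF S' S'sub uS' u(2)] not_line by blast
  next
    case False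
    then have "S \<inter> ?S' \<subseteq> span {u}"
      using mu_algebra_proper_subalgebra[OF S(1) subalgebra_inter[OF S(2) S'sub]] u S uS' by blast
    then obtain c where "?t = c *s u" using tS tS' by (auto simp: span_singleton)
    then have "br u (z + v) = c *s u + lam *s (z + v)" using t_eq by (simp add: algebra_simps)
    then have "br u (z + v) \<in> span {u, z + v}" using span_pair_iff by blast
    then show False using mu_algebra_no_pair_subalgebra[OF S' S'sub uS' u(2) zvS'] not_line by blast
  qed
qed

lemma no_mu_through_shift:
  assumes u: "u \<in> U" "u \<noteq> 0" and v: "v \<notin> U" "br u v = lam *s v + al *s u"
    and S: "mu_algebra scale br S" "lie_subalgebra scale br S" "u \<in> S"
    and z: "z \<in> S" "z \<notin> U" "z + v \<notin> U"
  shows False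
  using pair_cases[OF u z(3)] no_mu_through_shift_two_dim[OF u v S z] no_mu_through_shift_mu[OF u v S z]
  by blast

text \<open>Otherwise \<open>S = \<langle>u,z\<rangle>\<close> is a \<open>\<mu>\<close>-algebra; then
  either some \<open>z' \<in> S\<close> avoids \<open>U + F z\<close>, and \<open>z'\<close> or \<open>z\<close> contradicts the exclusion above,
  or \<open>S \<subseteq> U + F z\<close>, and then \<open>S \<inter> U = F u\<close> pins down \<open>[u,z]\<close>.\<close>
lemma bracket_in_span_pair_everywhere:
  assumes u: "u \<in> U" "u \<noteq> 0" and v: "v \<notin> U" "br u v = lam *s v + al *s u"
    and z: "z \<notin> U"
  shows "br u z \<in> span {u, z}"
proof -
  let ?S = "gen_subalg scale br {u, z}"
  have Ssub: "lie_subalgebra scale br ?S" by (rule gen_subalg_subalgebra)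
  have uS: "u \<in> ?S" and zS: "z \<in> ?S" using gen_subalg_generators[of "{u, z}"] by auto
  show ?thesis
  proof (cases rule: pair_cases[OF u z])
    case 1
    then show ?thesis using two_dim_pair_bracket u z by blast
  next
    case mu: 2
    show ?thesis
    proof (cases "\<exists>z'\<in>?S. \<forall>c. z' - c *s z \<notin> U")
      case True
      then obtain z' where z': "z' \<in> ?S" "\<forall>c. z' - c *s z \<notin> U" by blast
      have "z' \<notin> U" using z'(2)[rule_format, of 0] by simp
      moreover have "z' + v \<notin> U \<or> z + v \<notin> U"
        using z'(2)[rule_format, of 1] U_subspace subspace_diff[of U "z' + v" "z + v"] by auto
      ultimately show ?thesis
        using no_mu_through_shift[OF u v mu Ssub uS] z' zS z by blast
    next
      case False
      then obtain c where c: "br u z - c *s z \<in> U"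
        using subalgebra_bracket[OF Ssub uS zS] by blast
      have cS: "br u z - c *s z \<in> ?S"
        using subalgebra_bracket[OF Ssub uS zS] zS subalgebra_subspace[OF Ssub]
        by (intro subspace_diff subspace_scale) auto
      have "?S \<inter> U \<subseteq> span {u}"
        using mu_algebra_proper_subalgebra[OF mu subalgebra_inter[OF Ssub U_subalgebra]] u uS zS z
        by blast
      then obtain d where "br u z - c *s z = d *s u" using c cS by (auto simp: span_singleton)
      then have "br u z = d *s u + c *s z" by (simp add: algebra_simps)
      then show ?thesis using span_pair_iff by blast
    qed
  qed
qed

text \<open>For \<open>z \<notin> U \<union> span {u, z\<^sub>0}\<close> with
  \<open>[u,z] = \<beta> u + a z\<close>, comparing with \<open>[u, z\<^sub>0 + z]\<close> forces \<open>a = \<lambda>\<close>.\<close>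
lemma ad_coefficient_eq:
  assumes u: "u \<in> U" "u \<noteq> 0" and z0: "z0 \<notin> U" "br u z0 = lam *s z0 + al *s u"
    and inv: "\<And>z. z \<notin> U \<Longrightarrow> br u z \<in> span {u, z}"
    and z: "z \<notin> U" "z \<notin> span {u, z0}" and ab: "br u z = b *s u + a *s z"
  shows "a = lam"
proof (cases "z0 + z \<in> U")
  case False
  obtain b' a' where ab': "br u (z0 + z) = b' *s u + a' *s (z0 + z)"
    using inv[OF False] by (auto simp: span_pair_iff)
  have "(a - a') *s z = (b' - al - b) *s u + (a' - lam) *s z0"
    using ab ab' z0(2) by (simp add: bracket_add_right algebra_simps)
  also have "\<dots> \<in> span {u, z0}" using span_pair_iff by blast
  finally have "a - a' = 0" using scale_in_subspace_imp_zero[OF subspace_span _ z(2)] by blast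
  then have "(a - lam) *s z0 = (b - b' + al) *s u"
    using ab ab' z0(2) by (simp add: bracket_add_right algebra_simps)
  also have "\<dots> \<in> span {u}" by (simp add: span_scale span_base)
  finally have "a - lam = 0"
    using scale_in_subspace_imp_zero[OF subspace_span _ not_in_span_of_U[OF u(1) z0(1)]] by blast
  then show "a = lam" by simp
next
  case True
  have "br u (z0 + z) \<in> U" using subalgebra_bracket[OF U_subalgebra] u True by blast
  moreover have "(a - lam) *s z = br u (z0 + z) - lam *s (z0 + z) - (al + b) *s u"
    using ab z0(2) by (simp add: bracket_add_right algebra_simps)
  ultimately have "(a - lam) *s z \<in> U"
    using True u U_subspace by (simp add: subspace_diff subspace_scale)
  then have "a - lam = 0" using scale_in_subspace_imp_zero[OF U_subspace _ z(1)] by blast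
  then show "a = lam" by simp
qed

text \<open>Hence every \<open>z \<notin> U\<close> has the eigenvalue \<open>\<lambda>\<close> modulo \<open>F u\<close>; inside \<open>span {u, z\<^sub>0}\<close>
  this is immediate from \<open>[u,z\<^sub>0] = \<lambda> z\<^sub>0 + \<alpha> u\<close>.\<close>
lemma ad_scalar_outside_U:
  assumes u: "u \<in> U" "u \<noteq> 0" and z0: "z0 \<notin> U" "br u z0 = lam *s z0 + al *s u"
    and inv: "\<And>z. z \<notin> U \<Longrightarrow> br u z \<in> span {u, z}"
    and z: "z \<notin> U"
  shows "\<exists>c. br u z = lam *s z + c *s u"
proof (cases "z \<in> span {u, z0}")
  case True
  then obtain p q where zpq: "z = p *s u + q *s z0" by (auto simp: span_pair_iff)
  have "br u z = q *s br u z0"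
    by (simp add: zpq bracket_add_right bracket_scale_right bracket_self)
  also have "\<dots> = lam *s z + (q * al - lam * p) *s u" using z0(2) zpq by (simp add: algebra_simps)
  finally show ?thesis by blast
next
  case False
  obtain b a where ab: "br u z = b *s u + a *s z" using inv[OF z] by (auto simp: span_pair_iff)
  then have "a = lam" using ad_coefficient_eq[OF u z0 inv z False] by blast
  then show ?thesis using ab by (auto simp: add.commute)
qed

text \<open>Hence \<open>ad u\<close> is multiplication by \<open>\<lambda>\<close> modulo \<open>F u\<close> on all of \<open>L\<close>: elements
  \<open>x \<in> U\<close> are handled through \<open>x + z\<^sub>0 \<notin> U\<close>.\<close>
lemma ad_scalar_everywhere:
  assumes u: "u \<in> U" "u \<noteq> 0" and z0: "z0 \<notin> U" "br u z0 = lam *s z0 + al *s u"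
  shows "\<exists>c. br u x = lam *s x + c *s u"
proof -
  have outside: "\<exists>c. br u z = lam *s z + c *s u" if "z \<notin> U" for z
    using ad_scalar_outside_U[OF u z0 bracket_in_span_pair_everywhere[OF u z0] that] .
  show ?thesis
  proof (cases "x \<in> U")
    case False
    then show ?thesis using outside by blast
  next
    case True
    then have "x + z0 \<notin> U" using z0(1) U_subspace subspace_diff[of U "x + z0" x] by auto
    then obtain c where c: "br u (x + z0) = lam *s (x + z0) + c *s u" using outside by blast
    have "br u x = br u (x + z0) - br u z0" by (simp add: bracket_add_right)
    also have "\<dots> = lam *s x + (c - al) *s u" using c z0(2) by (simp add: algebra_simps)
    finally show ?thesis by blast
  qed
qed

text \<open>If the eigenvalue were \<open>0\<close>, the line \<open>F u \<subseteq> U\<close> would be an ideal.\<close>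
lemma ad_scalar_nonzero:
  assumes cf: "core_free scale br U" and u: "u \<in> U" "u \<noteq> 0"
    and ad: "\<And>x. \<exists>c. br u x = lam *s x + c *s u"
  shows "lam \<noteq> 0"
proof
  assume lam0: "lam = 0"
  have "lie_ideal scale br (span {u})"
    unfolding lie_ideal_def
  proof (intro conjI allI ballI)
    fix x y assume "y \<in> span {u}"
    then obtain k where y: "y = k *s u" by (auto simp: span_singleton)
    obtain c where "br u x = lam *s x + c *s u" using ad by blast
    then have "br x y = (- (k * c)) *s u"
      using lam0 by (simp add: y bracket_scale_right bracket_antisym[of x u])
    then show "br x y \<in> span {u}" by (simp add: span_neg span_scale span_base)
  qed simp
  moreover have "span {u} \<subseteq> U" using u U_subspace by (simp add: span_minimal)
  ultimately have "span {u} \<subseteq> {0}" using core_free_ideal_trivial cf by blast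
  then show False using u span_base[of u "{u}"] by auto
qed

lemma two_dim_pair_gives_eigenvalue:
  assumes cf: "core_free scale br U" and u: "u \<in> U" "u \<noteq> 0" and z: "z \<notin> U"
    and two: "dim (gen_subalg scale br {u, z}) = 2"
  obtains lam where "lam \<noteq> 0" "\<And>x. \<exists>c. br u x = lam *s x + c *s u"
proof -
  obtain al lam where "br u z = lam *s z + al *s u"
    using two_dim_pair_bracket[OF u z two] by (auto simp: span_pair_iff add.commute)
  then have "\<exists>c. br u x = lam *s x + c *s u" for x using ad_scalar_everywhere[OF u z] by blast
  then show ?thesis using that ad_scalar_nonzero[OF cf u] by blast
qed

end

text \<open>The situation reached above: \<open>ad u\<close> acts as \<open>\<lambda> \<noteq> 0\<close> modulo \<open>F u\<close>, with \<open>U\<close>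
  core-free.\<close>
locale eigen_decomposition = pair_condition scale br U
  for scale :: "'f::field \<Rightarrow> 'v::ab_group_add \<Rightarrow> 'v" (infixr "*s" 75) and br U +
  fixes u lam
  assumes core_free: "core_free scale br U"
    and u_in_U: "u \<in> U" and u_nonzero: "u \<noteq> 0" and lam_nonzero: "lam \<noteq> 0"
    and ad_u: "\<exists>c. br u x = lam *s x + c *s u"
begin

definition W :: "'v set" where "W = {w. br u w = lam *s w}"

lemma in_W: "w \<in> W \<longleftrightarrow> br u w = lam *s w"
  by (simp add: W_def)

lemma bracket_W_u: "w \<in> W \<Longrightarrow> br w u = - (lam *s w)"
  using bracket_antisym[of w u] by (simp add: in_W)

lemma W_subspace: "subspace W"
  unfolding subspace_def W_def
proof (intro conjI ballI allI)
  fix x y assume "x \<in> {w. br u w = lam *s w}" "y \<in> {w. br u w = lam *s w}"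
  then show "x + y \<in> {w. br u w = lam *s w}" by (simp add: bracket_add_right scale_right_distrib)
next
  fix c x assume "x \<in> {w. br u w = lam *s w}"
  then show "c *s x \<in> {w. br u w = lam *s w}" by (simp add: bracket_scale_right mult.commute)
qed simp

lemma W_scale: "w \<in> W \<Longrightarrow> k *s w \<in> W"
  using W_subspace subspace_scale by blast

text \<open>\<open>L = F u + W\<close>: subtract from \<open>x\<close> the multiple of \<open>u\<close> that \<open>ad u\<close> produces.\<close>
lemma decomposition: "\<exists>c w. w \<in> W \<and> x = c *s u + w"
proof -
  obtain c where c: "br u x = lam *s x + c *s u" using ad_u by blast
  let ?w = "x + (c / lam) *s u"
  have "br u ?w = lam *s ?w"
    using c lam_nonzero by (simp add: bracket_add_right bracket_scale_right bracket_self scale_right_distrib)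
  then have "?w \<in> W" by (simp add: in_W)
  moreover have "x = (- (c / lam)) *s u + ?w" by simp
  ultimately show ?thesis by blast
qed

text \<open>\<open>F u \<inter> W = 0\<close>, because \<open>[u,u] = 0\<close> while \<open>\<lambda> \<noteq> 0\<close>.\<close>
lemma line_meets_W: "c *s u \<in> W \<Longrightarrow> c = 0"
  using lam_nonzero u_nonzero by (simp add: in_W bracket_scale_right bracket_self)

lemma W_not_in_line: "w \<in> W \<Longrightarrow> w \<noteq> 0 \<Longrightarrow> w \<notin> span {u}"
  using line_meets_W by (auto simp: span_singleton)

text \<open>Jacobi: \<open>ad u\<close> acts on \<open>[W,W]\<close> as \<open>2\<lambda>\<close>, but also as \<open>\<lambda>\<close> modulo \<open>F u\<close>; hence
  \<open>[W,W] \<subseteq> F u\<close>, and the coefficient is killed by \<open>2\<close>.\<close>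
lemma bracket_W_W:
  assumes w1: "w1 \<in> W" and w2: "w2 \<in> W"
  shows "\<exists>d. br w1 w2 = d *s u \<and> (2::'f) * d = 0"
proof -
  let ?b = "br w1 w2"
  have first: "br w1 (br w2 u) = - (lam *s ?b)"
    by (simp only: bracket_W_u[OF w2] bracket_neg_right bracket_scale_right)
  have second: "br w2 (br u w1) = - (lam *s ?b)"
    using w1 bracket_antisym[of w2 w1] by (simp only: in_W bracket_scale_right scale_minus_right)
  have "br u ?b = - (br w1 (br w2 u) + br w2 (br u w1))"
    using jacobi[of u w1 w2] by (subst eq_neg_iff_add_eq_0) (simp only: add.assoc)
  also have "\<dots> = (2 * lam) *s ?b"
    unfolding first second by (simp only: minus_add_distrib minus_minus mult_2 scale_left_distrib)
  finally have twice: "br u ?b = (2 * lam) *s ?b" .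
  obtain c where "br u ?b = lam *s ?b + c *s u" using ad_u by blast
  then have "lam *s ?b + lam *s ?b = lam *s ?b + c *s u"
    using twice by (simp only: mult_2 scale_left_distrib)
  then have "lam *s ?b = c *s u" by (rule add_left_imp_eq)
  then have "?b = inverse lam *s (c *s u)" using lam_nonzero by (intro scale_cancel)
  then have b: "?b = (inverse lam * c) *s u" by simp
  then have "(2 * lam) *s ?b = 0" using twice by (simp add: bracket_scale_right bracket_self)
  then have "2 * lam = 0 \<or> inverse lam * c = 0" using b u_nonzero by simp
  then have "(2::'f) * (inverse lam * c) = 0" using lam_nonzero by auto
  then show ?thesis using b by blast
qed

lemma W_complement_of_line:
  assumes "c \<noteq> 0"
  shows "W \<inter> span {c *s u} = {0}" and "span (W \<union> {c *s u}) = UNIV"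
proof -
  have "k *s (c *s u) \<in> W \<Longrightarrow> k *s (c *s u) = 0" for k using line_meets_W[of "k * c"] by simp
  then show "W \<inter> span {c *s u} = {0}" using W_subspace subspace_0 by (auto simp: span_singleton)
  have "v \<in> span (W \<union> {c *s u})" for v
  proof -
    obtain d w where dw: "w \<in> W" "v = d *s u + w" using decomposition by blast
    then have "v = (d * inverse c) *s (c *s u) + w" using assms by simp
    moreover have "c *s u \<in> span (W \<union> {c *s u})" "w \<in> span (W \<union> {c *s u})"
      using dw by (auto intro: span_base)
    ultimately show ?thesis by (metis span_add span_scale)
  qed
  then show "span (W \<union> {c *s u}) = UNIV" by blast
qed

text \<open>If \<open>W\<close> is abelian, then \<open>L\<^sup>2 = W\<close>: brackets of \<open>c\<^sub>1 u + w\<^sub>1\<close> and \<open>c\<^sub>2 u + w\<^sub>2\<close> lie in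
  \<open>W\<close>, and every \<open>w \<in> W\<close> is \<open>[u, \<lambda>\<^sup>-\<^sup>1 w]\<close>.\<close>
lemma derived_algebra_if_W_abelian:
  assumes abelian: "\<forall>w1\<in>W. \<forall>w2\<in>W. br w1 w2 = 0"
  shows "bracket_set scale br UNIV UNIV = W"
proof
  have "br a b \<in> W" for a b
  proof -
    obtain c1 w1 where 1: "w1 \<in> W" "a = c1 *s u + w1" using decomposition by blast
    obtain c2 w2 where 2: "w2 \<in> W" "b = c2 *s u + w2" using decomposition by blast
    have "br a b = c1 *s (lam *s w2) + c2 *s (- (lam *s w1))"
      using 1 2 abelian bracket_W_u[OF 1(1)]
      by (simp only: bracket_add_left bracket_add_right bracket_scale_left bracket_scale_right
          bracket_self in_W scale_zero_right add_0_left add_0_right) (simp add: add.commute)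
    also have "\<dots> \<in> W" using 1 2 W_subspace by (intro subspace_add subspace_neg subspace_scale) auto
    finally show ?thesis .
  qed
  then show "bracket_set scale br UNIV UNIV \<subseteq> W"
    unfolding bracket_set_def by (intro span_minimal) (auto simp: W_subspace)
  show "W \<subseteq> bracket_set scale br UNIV UNIV"
  proof
    fix w assume "w \<in> W"
    then have "w = br u (inverse lam *s w)" using lam_nonzero by (simp add: bracket_scale_right in_W)
    then show "w \<in> bracket_set scale br UNIV UNIV"
      unfolding bracket_set_def by (blast intro: span_base)
  qed
qed

text \<open>If \<open>W\<close> is abelian, \<open>x = \<lambda>\<^sup>-\<^sup>1 u\<close> exhibits \<open>L = W \<oplus> F x\<close> as almost abelian.\<close>
lemma almost_abelian_if_W_abelian:
  assumes abelian: "\<forall>w1\<in>W. \<forall>w2\<in>W. br w1 w2 = 0"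
  shows "almost_abelian scale br"
proof -
  let ?x = "inverse lam *s u"
  have identity: "\<forall>a\<in>W. br ?x a = a" using lam_nonzero by (simp add: bracket_scale_left in_W)
  have "inverse lam \<noteq> 0" using lam_nonzero by simp
  note complement = W_complement_of_line[OF this]
  show ?thesis unfolding almost_abelian_def Let_def derived_algebra_if_W_abelian[OF abelian]
    by (intro exI[of _ ?x] conjI complement identity abelian)
qed

text \<open>Jacobi with \<open>a, b, w \<in> W\<close>: if \<open>[a,b] = u\<close>, then \<open>\<lambda> w\<close> is a combination of
  \<open>\<lambda> a\<close> and \<open>\<lambda> b\<close>, so \<open>W\<close> is spanned by \<open>a\<close> and \<open>b\<close>.\<close>
lemma W_spanned_by:
  assumes a: "a \<in> W" and b: "b \<in> W" and ab: "br a b = u" and w: "w \<in> W"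
  shows "w \<in> span {a, b}"
proof -
  obtain c1 where c1: "br b w = c1 *s u" using bracket_W_W[OF b w] by blast
  obtain c2 where c2: "br w a = c2 *s u" using bracket_W_W[OF w a] by blast
  have "br a (br b w) + br b (br w a) + br w (br a b) = 0" by (rule jacobi)
  then have "- (lam *s (c1 *s a + c2 *s b + w)) = 0"
    unfolding c1 c2 ab
    by (simp add: bracket_scale_right bracket_W_u[OF a] bracket_W_u[OF b] bracket_W_u[OF w]
        algebra_simps)
  then have "c1 *s a + c2 *s b + w = 0" using lam_nonzero by simp
  then have "w = (- c1) *s a + (- c2) *s b" by (simp add: algebra_simps eq_neg_iff_add_eq_0)
  then show ?thesis using span_pair_iff by blast
qed

lemma span_line_and_W:
  assumes "a \<in> W" "b \<in> W" "br a b = u"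
  shows "x \<in> span {u, a, b}"
proof -
  obtain c w where cw: "w \<in> W" "x = c *s u + w" using decomposition by blast
  have "w \<in> span {a, b}" using W_spanned_by[OF assms cw(1)] .
  then have "w \<in> span {u, a, b}" using span_mono[of "{a, b}" "{u, a, b}"] by blast
  then show ?thesis using cw(2) by (simp add: span_add span_scale span_base)
qed

lemma W_partner:
  assumes a: "a \<in> W" and b: "b \<in> W" and ab: "br a b = u" and w: "w \<in> W" "w \<noteq> 0"
  shows "\<exists>z\<in>W. br w z = u"
proof -
  obtain p q where w_pq: "w = p *s a + q *s b"
    using W_spanned_by[OF a b ab w(1)] by (auto simp: span_pair_iff)
  show ?thesis
  proof (cases "p = 0")
    case False
    have "br w (inverse p *s b) = u"
      using False by (simp add: w_pq ab bracket_add_left bracket_scale_left bracket_scale_right bracket_self)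
    then show ?thesis using W_scale[OF b] by blast
  next
    case True
    then have "q \<noteq> 0" using w w_pq by auto
    then have "br w ((- inverse q) *s a) = u"
      using True by (simp add: w_pq ab bracket_scale_left bracket_scale_right bracket_antisym[of b a])
    then show ?thesis using W_scale[OF a] by blast
  qed
qed

text \<open>If \<open>w \<in> U \<inter> W\<close> has a partner \<open>z \<in> W\<close>, then \<open>z \<notin> U\<close>: otherwise \<open>U\<close> would
  contain \<open>u, w, z\<close>, which span \<open>L\<close>, and \<open>U = L\<close> would be a nonzero ideal.\<close>
lemma partner_not_in_U:
  assumes w: "w \<in> W" "w \<in> U" and z: "z \<in> W" "br w z = u"
  shows "z \<notin> U"
proof
  assume "z \<in> U"
  then have "span {u, w, z} \<subseteq> U" using w u_in_U U_subspace by (simp add: span_minimal)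
  then have "UNIV \<subseteq> U" using span_line_and_W[OF w(1) z] by blast
  then have "UNIV \<subseteq> {0::'v}"
    using core_free_ideal_trivial[OF core_free] by (simp add: lie_ideal_def)
  then show False using u_nonzero by blast
qed

text \<open>In the nonabelian case \<open>U \<inter> W = 0\<close>: for \<open>0 \<noteq> w \<in> U \<inter> W\<close> with partner \<open>z \<notin> U\<close>,
  the subalgebra \<open>\<langle>w,z\<rangle> \<ni> u\<close> is not a \<open>\<mu>\<close>-algebra (it contains the subalgebra
  \<open>span {u, w}\<close>), and it is not two-dimensional, since then \<open>z \<in> span {u, w} \<inter> W = F w\<close>.\<close>
lemma U_meets_W_trivially:
  assumes a: "a \<in> W" and b: "b \<in> W" and ab: "br a b = u" and w: "w \<in> W" "w \<in> U"
  shows "w = 0"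
proof (rule ccontr)
  assume w0: "w \<noteq> 0"
  obtain z where z: "z \<in> W" "br w z = u" using W_partner[OF a b ab w(1) w0] by blast
  have zU: "z \<notin> U" using partner_not_in_U[OF w z] .
  let ?S = "gen_subalg scale br {w, z}"
  have wS: "w \<in> ?S" and zS: "z \<in> ?S" using gen_subalg_generators[of "{w, z}"] by auto
  have uS: "u \<in> ?S" using subalgebra_bracket[OF gen_subalg_subalgebra wS zS] z(2) by simp
  have w_out: "w \<notin> span {u}" using W_not_in_line w(1) w0 .
  show False
  proof (cases rule: pair_cases[OF w(2) w0 zU])
    case 1
    then have "z \<in> span {u, w}" using dim_two_span uS wS zS u_nonzero w_out by blast
    then obtain p q where zpq: "z = p *s u + q *s w" by (auto simp: span_pair_iff)
    then have "p *s u \<in> W" using z(1) w(1) W_subspace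
      by (metis add_diff_cancel_right' subspace_diff subspace_scale)
    then have "p = 0" by (rule line_meets_W)
    then have "br w z = 0" using zpq by (simp add: bracket_scale_right bracket_self)
    then show False using z(2) u_nonzero by simp
  next
    case 2
    have "br u w = 0 *s u + lam *s w" using w(1) by (simp add: in_W)
    then have "br u w \<in> span {u, w}" using span_pair_iff by blast
    then show False
      using mu_algebra_no_pair_subalgebra[OF 2 gen_subalg_subalgebra uS u_nonzero wS w_out] by blast
  qed
qed

lemma U_is_line:
  assumes a: "a \<in> W" and b: "b \<in> W" and ab: "br a b = u"
  shows "U = span {u}"
proof
  show "span {u} \<subseteq> U" using u_in_U U_subspace by (simp add: span_minimal)
  show "U \<subseteq> span {u}"
  proof
    fix y assume "y \<in> U"
    obtain c w where cw: "w \<in> W" "y = c *s u + w" using decomposition by blast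
    have "w \<in> U"
      using \<open>y \<in> U\<close> u_in_U U_subspace cw(2) subspace_diff[of U y "c *s u"] subspace_scale by force
    then have "w = 0" using U_meets_W_trivially[OF a b ab cw(1)] by blast
    then show "y \<in> span {u}" using cw by (simp add: span_scale span_base)
  qed
qed

text \<open>For \<open>a, e \<in> W\<close> with \<open>[a,e] = u\<close>, the vectors \<open>a\<close>, \<open>\<lambda>\<^sup>-\<^sup>1 e\<close>, \<open>\<lambda>\<^sup>-\<^sup>1 u\<close> form a basis
  of \<open>L\<close>: \<open>u\<close> is independent of \<open>W\<close>, and \<open>a, e\<close> are independent since \<open>[a,e] \<noteq> 0\<close>.\<close>
lemma scaled_basis:
  assumes a: "a \<in> W" and e: "e \<in> W" and ae: "br a e = u"
  defines "B \<equiv> inverse lam *s e" and "C \<equiv> inverse lam *s u"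
  shows "\<not> dependent {a, B, C}" and "span {a, B, C} = UNIV"
proof -
  have BW: "B \<in> W" unfolding B_def using e by (rule W_scale)
  have C_out: "k *s C \<in> W \<Longrightarrow> k = 0" for k
    using line_meets_W[of "k * inverse lam"] lam_nonzero unfolding C_def by simp
  have C0: "C \<noteq> 0" unfolding C_def using u_nonzero lam_nonzero by simp
  have B_out: "B \<notin> span {C}"
  proof
    assume "B \<in> span {C}"
    then obtain k where "B = k *s C" by (auto simp: span_singleton)
    then have "B = 0" using C_out BW by simp
    then have "e = 0" unfolding B_def using lam_nonzero by simp
    then show False using ae u_nonzero by simp
  qed
  have A_out: "a \<notin> span {B, C}"
  proof
    assume "a \<in> span {B, C}"
    then obtain p q where pq: "a = p *s B + q *s C" by (auto simp: span_pair_iff)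
    then have "q *s C \<in> W" using a BW W_subspace
      by (metis add_diff_cancel_left' subspace_diff subspace_scale)
    then have "a = (p * inverse lam) *s e" using pq C_out unfolding B_def by simp
    then have "br a e = 0" by (simp add: bracket_scale_left bracket_self)
    then show False using ae u_nonzero by simp
  qed
  show "\<not> dependent {a, B, C}"
    using independent_insertI[OF A_out independent_insertI[OF B_out]] C0 by simp
  have "u = lam *s C" "e = lam *s B" unfolding B_def C_def using lam_nonzero by simp_all
  then have "{u, a, e} \<subseteq> span {a, B, C}" by (auto simp: span_scale span_base)
  then show "span {a, B, C} = UNIV" using span_line_and_W[OF a e ae] span_minimal[of "{u, a, e}"] by blast
qed

text \<open>In characteristic two the basis \<open>A = a\<close>, \<open>B = \<lambda>\<^sup>-\<^sup>1 e\<close>, \<open>C = \<lambda>\<^sup>-\<^sup>1 u\<close> has the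
  products of \<open>K\<close> (signs disappear), and \<open>U = F u = F C\<close>.\<close>
lemma K_basis:
  assumes a: "a \<in> W" and e: "e \<in> W" and ae: "br a e = u" and two: "(2::'f) = 0"
  shows "iso_K_with scale br U"
proof -
  define B where "B = inverse lam *s e"
  define C where "C = inverse lam *s u"
  have AB: "br a B = C" unfolding B_def C_def by (simp add: bracket_scale_right ae)
  have BC: "br B C = B" unfolding B_def C_def using lam_nonzero bracket_W_u[OF e]
    by (simp add: bracket_scale_left bracket_scale_right neg_eq_self_char_two[OF two])
  have AC: "br a C = a" unfolding C_def using lam_nonzero bracket_W_u[OF a]
    by (simp add: bracket_scale_right neg_eq_self_char_two[OF two])
  have C0: "C \<noteq> 0" unfolding C_def using u_nonzero lam_nonzero by simp
  have "C \<notin> W" using line_meets_W[of "inverse lam"] lam_nonzero unfolding C_def by auto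
  then have distinct: "a \<noteq> B" "a \<noteq> C" "B \<noteq> C"
    using AB C0 bracket_self[of a] W_scale[OF e] a unfolding B_def by auto
  have "span {C} = span {u}"
    using span_image_scale[of "{u}" "\<lambda>_. inverse lam"] lam_nonzero unfolding C_def by simp
  then have "U = span {C}" using U_is_line[OF a e ae] by simp
  then show ?thesis
    using distinct scaled_basis[OF a e ae] AB BC AC
    unfolding iso_K_with_def B_def C_def by blast
qed

lemma iso_K_if_W_nonabelian:
  assumes a: "a \<in> W" and b: "b \<in> W" and ab: "br a b \<noteq> 0"
  shows "(2::'f) = 0" and "iso_K_with scale br U"
proof -
  obtain d where d: "br a b = d *s u" "(2::'f) * d = 0" using bracket_W_W[OF a b] by blast
  have "d \<noteq> 0" using d(1) ab by auto
  then show two: "(2::'f) = 0" using d(2) by simp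
  have "br a (inverse d *s b) = u" using d(1) \<open>d \<noteq> 0\<close> by (simp add: bracket_scale_right)
  then show "iso_K_with scale br U" using K_basis[OF a W_scale[OF b] _ two] by blast
qed

lemma almost_abelian_or_K:
  "almost_abelian scale br \<or> (CHAR('f) = 2 \<and> iso_K_with scale br U)"
proof (cases "\<forall>w1\<in>W. \<forall>w2\<in>W. br w1 w2 = 0")
  case True
  then show ?thesis using almost_abelian_if_W_abelian by blast
next
  case False
  then obtain a b where "a \<in> W" "b \<in> W" "br a b \<noteq> 0" by blast
  then show ?thesis using iso_K_if_W_nonabelian CHAR_eq_two by blast
qed

end

theorem lemma3p3:
  fixes scale :: "'f::field \<Rightarrow> 'v::ab_group_add \<Rightarrow> 'v"
    and br :: "'v \<Rightarrow> 'v \<Rightarrow> 'v"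
    and U :: "'v set"
  assumes "lie_algebra scale br"
    and "fin_dim scale"
    and "lie_subalgebra scale br U"
    and "core_free scale br U"
    and "\<forall>u\<in>U. \<forall>z. u \<noteq> 0 \<and> z \<notin> U \<longrightarrow>
           vector_space.dim scale (gen_subalg scale br {u, z}) = 2 \<or>
           mu_algebra scale br (gen_subalg scale br {u, z})"
  shows "almost_abelian scale br \<or>
         (\<forall>u\<in>U. \<forall>z. u \<noteq> 0 \<and> z \<notin> U \<longrightarrow> mu_algebra scale br (gen_subalg scale br {u, z})) \<or>
         (CHAR('f) = 2 \<and> iso_K_with scale br U)"
proof -
  interpret pair_condition scale br U
    using assms(1,3,5) lie_algebra_imp_lie by (simp add: pair_condition_def pair_condition_axioms_def)
  show ?thesis
  proof (cases "\<forall>u\<in>U. \<forall>z. u \<noteq> 0 \<and> z \<notin> U \<longrightarrow> mu_algebra scale br (gen_subalg scale br {u, z})")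
    case False
    then obtain u z where u: "u \<in> U" "u \<noteq> 0" and z: "z \<notin> U"
      and "\<not> mu_algebra scale br (gen_subalg scale br {u, z})" by blast
    then have "dim (gen_subalg scale br {u, z}) = 2" using pair_cases by blast
    then obtain lam where "lam \<noteq> 0" "\<And>x. \<exists>c. br u x = scale lam x + scale c u"
      using two_dim_pair_gives_eigenvalue[OF assms(4) u z] by blast
    then interpret eigen_decomposition scale br U u lam
      using assms(4) u by unfold_locales
    show ?thesis using almost_abelian_or_K by blast
  qed blast
qed

end
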